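(* Let $B$ be a positive integer and $a_1,\dots,a_N$ positive integers with $a_i\le B$ for all $i$. Let $b$ be the minimum number of parts in a partition of $\{1,\dots,N\}$ such that $\sum_{i\in P}a_i\le B$ for every part $P$ (the bin packing optimum). Consider the ring grooming instance with $n=N+1$, $c=B$, and list of traffic demands consisting of $2a_j$ copies of the pair $\{j,n\}$ for each $1\le j\le N$. Then its minimum number of ADMs satisfies $m=b+N$.
   Context: Ring grooming. An instance consists of integers $n\ge 2$ (ring size) and $c\ge 1$ (capacity), and a finite list $L$ of unordered pairs $\{j,k\}$ with $j\ne k$, $j,k\in\{1,\dots,n\}$ (repetitions allowed); these are the traffic demands. Let $d_{jk}=d_{kj}$ be the number of times $\{j,k\}$ occurs in $L$ (the traffic matrix; $d_{jj}=0$). Let $C_n$ be the cycle graph on vertices $1,\dots,n$ in cyclic order, with edges $\{l,l+1\}$ for $1\le l<n$ and $\{n,1\}$. A solution uses some finite number $r$ of "rings", each a copy of $C_n$ in which every edge has capacity $c$. A routing specifies, for every ring $i$ and every pair $j<k$, nonnegative integers $t^0_{ijk},t^1_{ijk}$: the amounts of $\{j,k\}$-traffic sent on ring $i$ along each of the two arcs of $C_n$ between $j$ and $k$. It is feasible if $\sum_i (t^0_{ijk}+t^1_{ijk})=d_{jk}$ for all $j<k$, and for every ring $i$ and every edge $e$ of $C_n$ the total traffic routed on ring $i$ along arcs containing $e$ is at most $c$. Ring $i$ needs an ADM (add/drop multiplexer) at vertex $j$ iff some traffic with endpoint $j$ is routed on ring $i$. The cost of a routing is the total number of ADMs, i.e.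 the number of pairs (ring $i$, vertex $j$) at which an ADM is needed. $m=m(n,c,L)$ denotes the minimum cost over all feasible routings. *)

theory Defs
  imports Main "HOL-Library.Disjoint_Sets"
begin

text \<open>Traffic demands are a list of pairs (j,k), read as unordered pairs {j,k}.
 Traffic matrix entry: number of occurrences of the unordered pair {j,k} in L.\<close>
definition traffic :: "(nat \<times> nat) list \<Rightarrow> nat \<Rightarrow> nat \<Rightarrow> nat" where
  "traffic L j k = (if j = k then 0 else length (filter (\<lambda>p. p = (j,k) \<or> p = (k,j)) L))"

text \<open>Edges of C_n are indexed by l in {1..n}: edge l = {l, l+1} for l < n, edge n = {n,1}.
 For j < k, arc 0 between j and k is j, j+1, ..., k and uses the edges l with j \<le> l < k;
 arc 1 is the complementary arc and uses the remaining edges.\<close>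
definition arc_uses :: "nat \<Rightarrow> nat \<Rightarrow> nat \<Rightarrow> nat \<Rightarrow> bool" where
  "arc_uses s j k l = (if s = 0 then j \<le> l \<and> l < k else \<not> (j \<le> l \<and> l < k))"

definition valid_pairs :: "nat \<Rightarrow> (nat \<times> nat) set" where
  "valid_pairs n = {(j,k). 1 \<le> j \<and> j < k \<and> k \<le> n}"

definition feasible_routing ::
  "nat \<Rightarrow> nat \<Rightarrow> (nat \<times> nat) list \<Rightarrow> nat \<Rightarrow> (nat \<Rightarrow> nat \<Rightarrow> nat \<Rightarrow> nat) \<Rightarrow> (nat \<Rightarrow> nat \<Rightarrow> nat \<Rightarrow> nat) \<Rightarrow> bool" where
  "feasible_routing n c L r t0 t1 \<longleftrightarrow>
     (\<forall>(j,k) \<in> valid_pairs n. (\<Sum>i<r. t0 i j k + t1 i j k) = traffic L j k) \<and>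
     (\<forall>i<r. \<forall>l \<in> {1..n}.
        (\<Sum>(j,k) \<in> valid_pairs n.
           (if arc_uses 0 j k l then t0 i j k else 0) + (if arc_uses 1 j k l then t1 i j k else 0)) \<le> c)"

definition needs_adm ::
  "nat \<Rightarrow> (nat \<Rightarrow> nat \<Rightarrow> nat \<Rightarrow> nat) \<Rightarrow> (nat \<Rightarrow> nat \<Rightarrow> nat \<Rightarrow> nat) \<Rightarrow> nat \<Rightarrow> nat \<Rightarrow> bool" where
  "needs_adm n t0 t1 i v \<longleftrightarrow>
     (\<exists>(j,k) \<in> valid_pairs n. (v = j \<or> v = k) \<and> t0 i j k + t1 i j k > 0)"

definition routing_cost ::
  "nat \<Rightarrow> nat \<Rightarrow> (nat \<Rightarrow> nat \<Rightarrow> nat \<Rightarrow> nat) \<Rightarrow> (nat \<Rightarrow> nat \<Rightarrow> nat \<Rightarrow> nat) \<Rightarrow> nat" where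
  "routing_cost n r t0 t1 = card {(i,v). i < r \<and> v \<in> {1..n} \<and> needs_adm n t0 t1 i v}"

definition min_adms :: "nat \<Rightarrow> nat \<Rightarrow> (nat \<times> nat) list \<Rightarrow> nat" where
  "min_adms n c L = (LEAST m. \<exists>r t0 t1. feasible_routing n c L r t0 t1 \<and> routing_cost n r t0 t1 = m)"

definition bin_packing_opt :: "nat \<Rightarrow> (nat \<Rightarrow> nat) \<Rightarrow> nat \<Rightarrow> nat" where
  "bin_packing_opt N a B = (LEAST b. \<exists>P. partition_on {1..N} P \<and> card P = b \<and> (\<forall>p\<in>P. sum a p \<le> B))"

definition bp_demands :: "nat \<Rightarrow> (nat \<Rightarrow> nat) \<Rightarrow> (nat \<times> nat) list" where
  "bp_demands N a = concat (map (\<lambda>j. replicate (2 * a j) (j, N + 1)) [1..<N+1])"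

end

theory Submission
  imports Defs
begin

(* Upper bound: give each bin of a packing its own ring and send a_j units of {j, n}-traffic
   along each of the two arcs. Every edge of that ring then carries the weight of the bin, and
   the ring needs ADMs exactly at n and at the items of the bin: N + b ADMs in all.

   Lower bound: on any ring, each unit of {j, n}-traffic uses exactly one of the two edges at n,
   so a ring carries at most 2B units of such traffic. Items whose whole demand 2 a_j is served
   by a single ring can therefore be packed into one bin per ring used; every other item is
   served by at least two rings and gets a bin of its own, paid for by its extra ADM. Hence
   every routing yields a packing with at most (number of ADMs) - N bins. *)

lemma partition_on_fibres: "partition_on A ((\<lambda>y. {x \<in> A. f x = y}) ` f ` A)"
  by (auto intro!: partition_onI simp: disjnt_def)

lemma card_fibres: "card ((\<lambda>y. {x \<in> A. f x = y}) ` f ` A) = card (f ` A)"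
  by (rule card_image) (auto simp: inj_on_def)

lemma card_indices_containing_eq_1:
  assumes "partition_on A P" "bij_betw f I P" "x \<in> A"
  shows "card {i \<in> I. x \<in> f i} = 1"
proof -
  obtain i where i: "i \<in> I" "x \<in> f i"
    using assms by (metis partition_onD1 UnionE bij_betw_imp_surj_on imageE)
  have "i' = i" if "i' \<in> I" "x \<in> f i'" for i'
  proof -
    have "f i' = f i"
      using partition_onD2[OF assms(1)] bij_betwE[OF assms(2)] i that
      by (metis disjnt_iff pairwiseD)
    then show ?thesis using inj_onD[OF bij_betw_imp_inj_on[OF assms(2)] _ that(1) i(1)] by blast
  qed
  then have "{i \<in> I. x \<in> f i} = {i}" using i by blast
  then show ?thesis by simp
qed

lemma card_plus_card_nonsingleton_le_sum_card:
  assumes "finite I" and "\<And>j. j \<in> I \<Longrightarrow> finite (K j) \<and> K j \<noteq> {}"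
  shows "card I + card {j \<in> I. card (K j) \<noteq> 1} \<le> (\<Sum>j\<in>I. card (K j))"
proof -
  have "card I + card {j \<in> I. card (K j) \<noteq> 1} = (\<Sum>j\<in>I. 1 + of_bool (card (K j) \<noteq> 1))"
    using assms(1) by (simp only: sum.distrib sum_of_bool_eq) (simp add: Int_def conj_commute)
  also have "\<dots> \<le> (\<Sum>j\<in>I. card (K j))"
  proof (rule sum_mono)
    fix j assume "j \<in> I"
    then have "0 < card (K j)" using assms(2) card_gt_0_iff by blast
    then show "1 + of_bool (card (K j) \<noteq> 1) \<le> card (K j)" by auto
  qed
  finally show ?thesis .
qed

lemma sum_weights_carried_by_one_le:
  fixes x :: "'r \<Rightarrow> 'a \<Rightarrow> nat"
  assumes "finite R" "finite I" "i \<in> R"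
    and demand: "\<And>j. j \<in> I \<Longrightarrow> (\<Sum>i\<in>R. x i j) = w j"
    and capacity: "(\<Sum>j\<in>I. x i j) \<le> C"
  shows "sum w {j \<in> I. {i' \<in> R. 0 < x i' j} = {i}} \<le> C"
proof -
  let ?p = "{j \<in> I. {i' \<in> R. 0 < x i' j} = {i}}"
  have "x i j = w j" if "j \<in> ?p" for j
  proof -
    have "(\<Sum>i'\<in>R. x i' j) = (\<Sum>i'\<in>{i}. x i' j)"
      using that \<open>finite R\<close> by (intro sum.mono_neutral_right) auto
    then show ?thesis using demand that by simp
  qed
  then have "sum w ?p = (\<Sum>j\<in>?p. x i j)" by simp
  also have "\<dots> \<le> (\<Sum>j\<in>I. x i j)" using \<open>finite I\<close> by (intro sum_mono2) auto
  also have "\<dots> \<le> C" by (rule capacity)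
  finally show ?thesis .
qed

lemma packing_from_fractional_assignment:
  fixes x :: "'r \<Rightarrow> 'a \<Rightarrow> nat"
  assumes "finite R" "finite I"
    and demand: "\<And>j. j \<in> I \<Longrightarrow> (\<Sum>i\<in>R. x i j) = w j"
    and positive: "\<And>j. j \<in> I \<Longrightarrow> 0 < w j"
    and small: "\<And>j. j \<in> I \<Longrightarrow> w j \<le> C"
    and capacity: "\<And>i. i \<in> R \<Longrightarrow> (\<Sum>j\<in>I. x i j) \<le> C"
  shows "\<exists>Q. partition_on I Q \<and> (\<forall>p\<in>Q. sum w p \<le> C) \<and>
           card Q + card I \<le> (\<Sum>j\<in>I. card {i \<in> R. 0 < x i j}) + card {i \<in> R. \<exists>j\<in>I. 0 < x i j}"
proof -
  define K where "K j = {i \<in> R. 0 < x i j}" for j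
  define U where "U = {i \<in> R. \<exists>j\<in>I. 0 < x i j}"
  define shared where "shared = {j \<in> I. card (K j) \<noteq> 1}"
  \<comment> \<open>\<open>Inl i\<close> labels the items served by ring \<open>i\<close> alone; any other item \<open>j\<close>
    gets a bin \<open>Inr j\<close> of its own.\<close>
  define bin where "bin j = (if card (K j) = 1 then Inl (the_elem (K j)) else Inr j)" for j
  define Q where "Q = (\<lambda>y. {j \<in> I. bin j = y}) ` bin ` I"
  have K: "finite (K j) \<and> K j \<noteq> {}" if "j \<in> I" for j
    using \<open>finite R\<close> demand[OF that] positive[OF that]
    by (auto simp: K_def) (metis gr0I sum.neutral less_irrefl)
  have "sum w p \<le> C" if "p \<in> Q" for p
  proof -
    obtain j0 where j0: "j0 \<in> I" "p = {j \<in> I. bin j = bin j0}" using \<open>p \<in> Q\<close> Q_def by blast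
    show ?thesis
    proof (cases "card (K j0) = 1")
      case True
      then obtain i where i: "K j0 = {i}" by (auto simp: card_1_singleton_iff)
      then have "p = {j \<in> I. K j = {i}}" and "i \<in> R"
        using j0(2) by (auto simp: bin_def card_1_singleton_iff K_def)
      then show ?thesis
        using sum_weights_carried_by_one_le[OF assms(1,2) _ demand capacity] by (simp add: K_def)
    next
      case False
      then have "p = {j0}" using j0 by (auto simp: bin_def split: if_splits)
      then show ?thesis using small j0(1) by simp
    qed
  qed
  moreover have "card Q \<le> card U + card shared"
  proof -
    have "bin ` I \<subseteq> U <+> shared"
      using K by (fastforce simp: bin_def U_def shared_def K_def card_1_singleton_iff)
    then have "card (bin ` I) \<le> card (U <+> shared)"
      using \<open>finite R\<close> \<open>finite I\<close> by (intro card_mono) (auto simp: U_def shared_def)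
    then show ?thesis
      using \<open>finite R\<close> \<open>finite I\<close> by (simp add: Q_def card_fibres card_Plus U_def shared_def)
  qed
  moreover have "card I + card shared \<le> (\<Sum>j\<in>I. card (K j))"
    unfolding shared_def using \<open>finite I\<close> K by (rule card_plus_card_nonsingleton_le_sum_card)
  ultimately show ?thesis
    using partition_on_fibres[of I bin] unfolding Q_def K_def U_def by auto
qed

definition ring_load ::
  "nat \<Rightarrow> (nat \<Rightarrow> nat \<Rightarrow> nat \<Rightarrow> nat) \<Rightarrow> (nat \<Rightarrow> nat \<Rightarrow> nat \<Rightarrow> nat) \<Rightarrow> nat \<Rightarrow> nat \<Rightarrow> nat" where
  "ring_load n t0 t1 i l = (\<Sum>(j,k) \<in> valid_pairs n.
     (if arc_uses 0 j k l then t0 i j k else 0) + (if arc_uses 1 j k l then t1 i j k else 0))"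

lemma feasible_routing_iff:
  "feasible_routing n c L r t0 t1 \<longleftrightarrow>
     (\<forall>(j,k) \<in> valid_pairs n. (\<Sum>i<r. t0 i j k + t1 i j k) = traffic L j k) \<and>
     (\<forall>i<r. \<forall>l \<in> {1..n}. ring_load n t0 t1 i l \<le> c)"
  unfolding feasible_routing_def ring_load_def ..

lemma ring_load_same_on_both_arcs: "ring_load n t t i l = (\<Sum>(j,k) \<in> valid_pairs n. t i j k)"
  unfolding ring_load_def by (intro sum.cong) (auto simp: arc_uses_def)

lemma finite_valid_pairs: "finite (valid_pairs n)"
  by (rule finite_subset[of _ "{1..n} \<times> {1..n}"]) (auto simp: valid_pairs_def)

lemma sum_valid_pairs_spokes:
  fixes g :: "nat \<times> nat \<Rightarrow> 'b::comm_monoid_add"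
  assumes "S \<subseteq> {1..<n}"
    and "\<And>j k. (j,k) \<in> valid_pairs n \<Longrightarrow> k \<noteq> n \<or> j \<notin> S \<Longrightarrow> g (j,k) = 0"
  shows "sum g (valid_pairs n) = (\<Sum>j\<in>S. g (j,n))"
proof -
  have "sum g (valid_pairs n) = sum g ((\<lambda>j. (j,n)) ` S)"
    using assms by (intro sum.mono_neutral_right finite_valid_pairs) (auto simp: valid_pairs_def)
  also have "\<dots> = (\<Sum>j\<in>S. g (j,n))"
    by (subst sum.reindex) (auto simp: inj_on_def)
  finally show ?thesis .
qed

lemma sum_spokes_le_sum_valid_pairs:
  fixes g :: "nat \<times> nat \<Rightarrow> 'b::canonically_ordered_monoid_add"
  shows "(\<Sum>j\<in>{1..<n}. g (j,n)) \<le> sum g (valid_pairs n)"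
proof -
  have "(\<Sum>j\<in>{1..<n}. g (j,n)) = sum g ((\<lambda>j. (j,n)) ` {1..<n})"
    by (subst sum.reindex) (auto simp: inj_on_def)
  also have "\<dots> \<le> sum g (valid_pairs n)"
    by (intro sum_mono2 finite_valid_pairs) (auto simp: valid_pairs_def)
  finally show ?thesis .
qed

(* Edges n - 1 and n are the two edges at vertex n: for j < n, arc 0 of {j, n} uses the first
   and arc 1 the second. *)
lemma spoke_traffic_le_ring_loads:
  assumes "2 \<le> n"
  shows "(\<Sum>j\<in>{1..<n}. t0 i j n + t1 i j n) \<le> ring_load n t0 t1 i (n - 1) + ring_load n t0 t1 i n"
proof -
  let ?g = "\<lambda>l (j,k). (if arc_uses 0 j k l then t0 i j k else 0) + (if arc_uses 1 j k l then t1 i j k else 0)"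
  have "(\<Sum>j\<in>{1..<n}. t0 i j n + t1 i j n) = (\<Sum>j\<in>{1..<n}. ?g (n - 1) (j,n) + ?g n (j,n))"
    using assms by (intro sum.cong) (auto simp: arc_uses_def)
  also have "\<dots> \<le> (\<Sum>p\<in>valid_pairs n. ?g (n - 1) p + ?g n p)"
    by (rule sum_spokes_le_sum_valid_pairs[where g = "\<lambda>p. ?g (n - 1) p + ?g n p"])
  also have "\<dots> = ring_load n t0 t1 i (n - 1) + ring_load n t0 t1 i n"
    unfolding ring_load_def by (rule sum.distrib)
  finally show ?thesis .
qed

lemma spoke_traffic_le_twice_capacity:
  assumes "feasible_routing n c L r t0 t1" "i < r" "2 \<le> n"
  shows "(\<Sum>j\<in>{1..<n}. t0 i j n + t1 i j n) \<le> 2 * c"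
proof -
  have "ring_load n t0 t1 i (n - 1) \<le> c" "ring_load n t0 t1 i n \<le> c"
    using assms by (auto simp: feasible_routing_iff)
  then show ?thesis using spoke_traffic_le_ring_loads[OF assms(3), of t0 i t1] by linarith
qed

lemma routing_cost_eq_sum:
  "routing_cost n r t0 t1 = (\<Sum>v\<in>{1..n}. card {i. i < r \<and> needs_adm n t0 t1 i v})"
proof -
  have "{(i,v). i < r \<and> v \<in> {1..n} \<and> needs_adm n t0 t1 i v}
      = prod.swap ` (SIGMA v:{1..n}. {i. i < r \<and> needs_adm n t0 t1 i v})"
    by auto
  then show ?thesis
    unfolding routing_cost_def by (simp add: card_image)
qed

lemma needs_adm_spoke:
  assumes "(j,k) \<in> valid_pairs n" "0 < t0 i j k + t1 i j k"
  shows "needs_adm n t0 t1 i j" "needs_adm n t0 t1 i k"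
  using assms unfolding needs_adm_def by auto

lemma traffic_bp_demands:
  assumes "1 \<le> j" "j < k" "k \<le> N + 1"
  shows "traffic (bp_demands N a) j k = (if k = N + 1 then 2 * a j else 0)"
proof -
  have "traffic (bp_demands N a) j k = (\<Sum>i\<leftarrow>[1..<N+1]. if (i, N + 1) = (j, k) then 2 * a i else 0)"
    using assms
    by (simp add: traffic_def bp_demands_def filter_concat length_concat comp_def filter_replicate
        if_distrib[of length] del: upt_Suc cong: if_cong)
  also have "\<dots> = (\<Sum>i\<in>{1..<N+1}. if (i, N + 1) = (j, k) then 2 * a i else 0)"
    by (simp only: sum_list_distinct_conv_sum_set distinct_upt set_upt)
  also have "\<dots> = (if k = N + 1 then 2 * a j else 0)"
    using assms by (simp add: sum.delta')
  finally show ?thesis .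
qed

lemma bij_betw_partition_block:
  assumes "partition_on A P" "bij_betw f I P" "i \<in> I"
  shows "f i \<in> P" "f i \<subseteq> A" "f i \<noteq> {}"
proof -
  show "f i \<in> P" using bij_betwE[OF assms(2)] assms(3) by blast
  then show "f i \<subseteq> A" "f i \<noteq> {}" using partition_onD1[OF assms(1)] partition_onD3[OF assms(1)] by auto
qed

definition packing_routing ::
  "nat \<Rightarrow> (nat \<Rightarrow> nat) \<Rightarrow> (nat \<Rightarrow> nat set) \<Rightarrow> nat \<Rightarrow> nat \<Rightarrow> nat \<Rightarrow> nat" where
  "packing_routing N a f i j k = (if k = N + 1 \<and> j \<in> f i then a j else 0)"

lemma feasible_packing_routing:
  assumes P: "partition_on {1..N} P" and bins: "\<forall>p\<in>P. sum a p \<le> B"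
    and f: "bij_betw f {..<card P} P"
  shows "feasible_routing (N + 1) B (bp_demands N a) (card P) (packing_routing N a f) (packing_routing N a f)"
proof -
  let ?t = "packing_routing N a f"
  have block: "f i \<in> P" "f i \<subseteq> {1..N}" if "i < card P" for i
    using bij_betw_partition_block[OF P f] that by auto
  have "(\<Sum>i<card P. ?t i j k + ?t i j k) = traffic (bp_demands N a) j k"
    if "(j,k) \<in> valid_pairs (N + 1)" for j k
  proof (cases "k = N + 1")
    case True
    then have "(\<Sum>i<card P. ?t i j k + ?t i j k) = (\<Sum>i<card P. if j \<in> f i then 2 * a j else 0)"
      by (intro sum.cong) (auto simp: packing_routing_def)
    also have "\<dots> = (\<Sum>i \<in> {i \<in> {..<card P}. j \<in> f i}. 2 * a j)"
      by (simp add: sum.inter_filter[symmetric])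
    finally show ?thesis
      using that True card_indices_containing_eq_1[OF P f] traffic_bp_demands
      by (simp add: valid_pairs_def)
  next
    case False
    then show ?thesis using that traffic_bp_demands by (simp add: valid_pairs_def packing_routing_def)
  qed
  moreover have "ring_load (N + 1) ?t ?t i l \<le> B" if "i < card P" for i l
  proof -
    have "ring_load (N + 1) ?t ?t i l = (\<Sum>j \<in> f i. ?t i j (N + 1))"
      unfolding ring_load_same_on_both_arcs using block(2)[OF that]
      by (subst sum_valid_pairs_spokes[of "f i"]) (auto simp: packing_routing_def)
    also have "\<dots> = sum a (f i)" by (simp add: packing_routing_def)
    finally show ?thesis using bins block(1)[OF that] by simp
  qed
  ultimately show ?thesis by (auto simp: feasible_routing_iff)
qed

lemma routing_cost_packing_routing:
  assumes items: "\<forall>j \<in> {1..N}. 1 \<le> a j"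
    and P: "partition_on {1..N} P" and f: "bij_betw f {..<card P} P"
  shows "routing_cost (N + 1) (card P) (packing_routing N a f) (packing_routing N a f) = card P + N"
proof -
  let ?t = "packing_routing N a f"
  have block: "f i \<subseteq> {1..N}" "f i \<noteq> {}" if "i < card P" for i
    using bij_betw_partition_block[OF P f] that by auto
  have adm: "needs_adm (N + 1) ?t ?t i v \<longleftrightarrow> v \<in> f i \<or> v = N + 1" if i: "i < card P" for i v
  proof
    assume "needs_adm (N + 1) ?t ?t i v"
    then show "v \<in> f i \<or> v = N + 1" by (auto simp: needs_adm_def packing_routing_def split: if_splits)
  next
    assume "v \<in> f i \<or> v = N + 1"
    then obtain j where j: "j \<in> f i" "v = j \<or> v = N + 1"
      using block(2)[OF i] by blast
    then have "j \<in> {1..N}" using block(1)[OF i] by blast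
    moreover have "1 \<le> a j" using items \<open>j \<in> {1..N}\<close> by blast
    ultimately have "(j, N + 1) \<in> valid_pairs (N + 1)" "0 < ?t i j (N + 1) + ?t i j (N + 1)"
      using j(1) by (auto simp: valid_pairs_def packing_routing_def)
    from needs_adm_spoke[of j "N + 1" "N + 1" ?t i ?t, OF this] j(2)
    show "needs_adm (N + 1) ?t ?t i v" by blast
  qed
  have "card {i. i < card P \<and> needs_adm (N + 1) ?t ?t i v} = 1" if "v \<in> {1..N}" for v
    using card_indices_containing_eq_1[OF P f that] that adm by (simp cong: conj_cong)
  moreover have "{i. i < card P \<and> needs_adm (N + 1) ?t ?t i (N + 1)} = {..<card P}"
    using adm by auto
  ultimately show ?thesis
    by (simp add: routing_cost_eq_sum sum.cl_ivl_Suc)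
qed

lemma routing_from_packing:
  assumes "\<forall>j \<in> {1..N}. 1 \<le> a j"
    and P: "partition_on {1..N} P" and "\<forall>p\<in>P. sum a p \<le> B"
  shows "\<exists>r t0 t1. feasible_routing (N + 1) B (bp_demands N a) r t0 t1
            \<and> routing_cost (N + 1) r t0 t1 = card P + N"
proof -
  obtain f where "bij_betw f {..<card P} P"
    using finite_elements[OF _ P] ex_bij_betw_nat_finite lessThan_atLeast0 by fastforce
  then show ?thesis
    using feasible_packing_routing routing_cost_packing_routing assms by blast
qed

lemma packing_from_routing:
  assumes "1 \<le> N" and items: "\<forall>j \<in> {1..N}. 1 \<le> a j \<and> a j \<le> B"
    and feasible: "feasible_routing (N + 1) B (bp_demands N a) r t0 t1"
  shows "\<exists>Q. partition_on {1..N} Q \<and> (\<forall>p\<in>Q. sum a p \<le> B)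
            \<and> card Q + N \<le> routing_cost (N + 1) r t0 t1"
proof -
  define x where "x i j = t0 i j (N + 1) + t1 i j (N + 1)" for i j
  have demand: "(\<Sum>i\<in>{..<r}. x i j) = 2 * a j" if "j \<in> {1..N}" for j
    using feasible that traffic_bp_demands[of j "N + 1" N a]
    by (auto simp: feasible_routing_iff valid_pairs_def x_def)
  have capacity: "(\<Sum>j\<in>{1..N}. x i j) \<le> 2 * B" if "i \<in> {..<r}" for i
    using spoke_traffic_le_twice_capacity[OF feasible, of i] that \<open>1 \<le> N\<close>
    by (simp add: x_def atLeastLessThanSuc_atLeastAtMost)
  obtain Q where Q: "partition_on {1..N} Q" "\<forall>p\<in>Q. sum (\<lambda>j. 2 * a j) p \<le> 2 * B"
    and card_Q: "card Q + N \<le> (\<Sum>j\<in>{1..N}. card {i \<in> {..<r}. 0 < x i j})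
                              + card {i \<in> {..<r}. \<exists>j\<in>{1..N}. 0 < x i j}"
    using packing_from_fractional_assignment[OF _ _ demand _ _ capacity] items by fastforce
  have adm: "needs_adm (N + 1) t0 t1 i j \<and> needs_adm (N + 1) t0 t1 i (N + 1)"
    if "j \<in> {1..N}" "0 < x i j" for i j
    using that needs_adm_spoke[of j "N + 1" "N + 1" t0 i t1] by (simp add: valid_pairs_def x_def)
  have "(\<Sum>j\<in>{1..N}. card {i \<in> {..<r}. 0 < x i j})
      \<le> (\<Sum>j\<in>{1..N}. card {i. i < r \<and> needs_adm (N + 1) t0 t1 i j})"
    using adm by (intro sum_mono card_mono) auto
  moreover have "card {i \<in> {..<r}. \<exists>j\<in>{1..N}. 0 < x i j}
      \<le> card {i. i < r \<and> needs_adm (N + 1) t0 t1 i (N + 1)}"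
    using adm by (intro card_mono) auto
  ultimately have "card Q + N \<le> routing_cost (N + 1) r t0 t1"
    using card_Q by (simp add: routing_cost_eq_sum sum.cl_ivl_Suc)
  moreover have "\<forall>p\<in>Q. sum a p \<le> B" using Q(2) by (simp add: sum_distrib_left[symmetric])
  ultimately show ?thesis using Q(1) by blast
qed

lemma bin_packing_opt_le:
  assumes "partition_on {1..N} P" "\<forall>p\<in>P. sum a p \<le> B"
  shows "bin_packing_opt N a B \<le> card P"
  unfolding bin_packing_opt_def by (rule Least_le) (use assms in blast)

lemma bin_packing_opt_attained:
  assumes "\<forall>j \<in> {1..N}. a j \<le> B"
  obtains P where "partition_on {1..N} P" "\<forall>p\<in>P. sum a p \<le> B" "card P = bin_packing_opt N a B"
proof -
  have "\<exists>P. partition_on {1..N} P \<and> card P = card ((\<lambda>j. {j}) ` {1..N}) \<and> (\<forall>p\<in>P. sum a p \<le> B)"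
    using partition_on_singletons assms by fastforce
  then have "\<exists>P. partition_on {1..N} P \<and> card P = bin_packing_opt N a B \<and> (\<forall>p\<in>P. sum a p \<le> B)"
    unfolding bin_packing_opt_def by (rule LeastI)
  then show ?thesis using that by blast
qed

theorem mainTheorem2:
  fixes N B :: nat and a :: "nat \<Rightarrow> nat"
  assumes "N \<ge> 1" and "B \<ge> 1"
    and "\<forall>i \<in> {1..N}. 1 \<le> a i \<and> a i \<le> B"
  shows "min_adms (N + 1) B (bp_demands N a) = bin_packing_opt N a B + N"
proof -
  obtain P where P: "partition_on {1..N} P" "\<forall>p\<in>P. sum a p \<le> B" "card P = bin_packing_opt N a B"
    using bin_packing_opt_attained assms(3) by blast
  show ?thesis
    unfolding min_adms_def
  proof (rule Least_equality)
    show "\<exists>r t0 t1. feasible_routing (N + 1) B (bp_demands N a) r t0 t1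
        \<and> routing_cost (N + 1) r t0 t1 = bin_packing_opt N a B + N"
      using routing_from_packing[OF _ P(1,2)] assms(3) P(3) by simp
  next
    fix m assume "\<exists>r t0 t1. feasible_routing (N + 1) B (bp_demands N a) r t0 t1
        \<and> routing_cost (N + 1) r t0 t1 = m"
    then obtain r t0 t1 where "feasible_routing (N + 1) B (bp_demands N a) r t0 t1"
        "routing_cost (N + 1) r t0 t1 = m" by blast
    then show "bin_packing_opt N a B + N \<le> m"
      using packing_from_routing[OF assms(1,3)] bin_packing_opt_le by fastforce
  qed
qed

end
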